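(* Let $n\ge1$ and $k$ be integers with $1\le k\le 32n$. For $p\in\Delta^k$, let $X_1,\dots,X_n$ be i.i.d. categorical on $[k]=\{1,\dots,k\}$ with $\Pr[X_i=j]=p_j$. Then \[ \inf_{\hat p}\sup_{p\in\Delta^k}\mathbb E\big[\|p-\hat p(X_1,\dots,X_n)\|_1\big]\ge\frac{3\log 2}{4096}\sqrt{\frac{k-1}{n}}, \] where the infimum is over all (possibly randomized) functions $\hat p:[k]^n\to\Delta^k$.
   Context: $\Delta^k:=\{p\in[0,1]^k:\sum_{j=1}^k p_j=1\}$ is the probability simplex, and $\|v\|_1=\sum_j|v_j|$. *)

theory Defs
  imports "HOL-Probability.Probability" "HOL-Library.FuncSet"
begin

definition prob_simplex :: "nat \<Rightarrow> (nat \<Rightarrow> real) set" where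
  "prob_simplex k = {p. (\<forall>j\<in>{1..k}. 0 \<le> p j \<and> p j \<le> 1) \<and> (\<Sum>j=1..k. p j) = 1
                   \<and> (\<forall>j. j \<notin> {1..k} \<longrightarrow> p j = 0)}"

definition l1dist :: "nat \<Rightarrow> (nat \<Rightarrow> real) \<Rightarrow> (nat \<Rightarrow> real) \<Rightarrow> real" where
  "l1dist k p q = (\<Sum>j=1..k. \<bar>p j - q j\<bar>)"

text \<open>Samples (X_1,...,X_n) in [k]^n, indexed by {0..<n}.\<close>
definition samples :: "nat \<Rightarrow> nat \<Rightarrow> (nat \<Rightarrow> nat) set" where
  "samples k n = ({0..<n} \<rightarrow>\<^sub>E {1..k})"

definition sample_prob :: "nat \<Rightarrow> (nat \<Rightarrow> real) \<Rightarrow> (nat \<Rightarrow> nat) \<Rightarrow> real" where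
  "sample_prob n p x = (\<Prod>i<n. p (x i))"

text \<open>Deterministic estimators correspond to Dirac measures.\<close>
definition randomized_estimator :: "nat \<Rightarrow> nat \<Rightarrow> ((nat \<Rightarrow> nat) \<Rightarrow> (nat \<Rightarrow> real) measure) \<Rightarrow> bool" where
  "randomized_estimator k n est \<longleftrightarrow>
     (\<forall>x\<in>samples k n. prob_space (est x) \<and> space (est x) \<subseteq> prob_simplex k \<and>
        (\<forall>p. (\<lambda>q. l1dist k p q) \<in> borel_measurable (est x)))"

definition risk :: "nat \<Rightarrow> nat \<Rightarrow> ((nat \<Rightarrow> nat) \<Rightarrow> (nat \<Rightarrow> real) measure) \<Rightarrow> (nat \<Rightarrow> real) \<Rightarrow> ennreal" where
  "risk k n est p = (\<Sum>x\<in>samples k n. ennreal (sample_prob n p x) *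
                        (\<integral>\<^sup>+ q. ennreal (l1dist k p q) \<partial>(est x)))"

end

theory Submission imports Defs begin

(* Assouad's method. Split the coordinates 1..2m (m = k div 2) into m pairs {2j+1, 2j+2} and,
   for S \<subseteq> {..<m}, let cube_dist S give the two coordinates of pair j the masses
   (1 \<plusminus> \<delta>)/(2m), the heavier one being 2j+1 iff j \<in> S. The L1 loss against cube_dist S
   dominates the sum of the per-pair losses, and the j-th pair losses of any estimate against
   the neighbours S and insert j S add up to at least 2\<delta>/m. The n-sample laws of two neighbours have
   Bhattacharyya coefficient at least (1 - \<delta>^2/m)^n, so their overlap is at least 1/4 once
   4n\<delta>^2 \<le> m (Le Cam). Averaging over the 2^m vertices yields one with risk at least \<delta>/4.
   Randomization does not help, since by convexity of the loss the estimator returning the mean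
   of its output distribution is at least as good; \<delta> = min 1 (sqrt (m/(4n))) gives the rate. *)

lemma sum_samples_prod:
  fixes f :: "nat \<Rightarrow> 'a::comm_semiring_1"
  shows "(\<Sum>x\<in>samples k n. \<Prod>i<n. f (x i)) = (\<Sum>a=1..k. f a) ^ n"
  using prod_sum_PiE[of "{..<n}" "\<lambda>_. {1..k}" "\<lambda>_. f"]
  by (simp add: samples_def atLeast0LessThan)

lemma prob_simplex_nonneg: "p \<in> prob_simplex k \<Longrightarrow> 0 \<le> p j"
  unfolding prob_simplex_def by (cases "j \<in> {1..k}") auto

lemma sample_prob_nonneg: "p \<in> prob_simplex k \<Longrightarrow> 0 \<le> sample_prob n p x"
  unfolding sample_prob_def by (intro prod_nonneg prob_simplex_nonneg)

lemma sum_sample_prob: "p \<in> prob_simplex k \<Longrightarrow> (\<Sum>x\<in>samples k n. sample_prob n p x) = 1"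
  unfolding sample_prob_def sum_samples_prod by (simp add: prob_simplex_def)

lemma sum_pairs:
  fixes f :: "nat \<Rightarrow> 'a::comm_monoid_add"
  shows "(\<Sum>i=1..2*m. f i) = (\<Sum>j<m. f (2*j+1) + f (2*j+2))"
proof (induction m)
  case (Suc m)
  have "{1..2 * Suc m} = insert (2*m+2) (insert (2*m+1) {1..2*m})" by auto
  then have "(\<Sum>i=1..2 * Suc m. f i) = f (2*m+2) + (f (2*m+1) + (\<Sum>i=1..2*m. f i))"
    by simp
  then show ?case using Suc by (simp add: ac_simps)
qed simp

lemma sum_min_ge_affinity:
  fixes P Q :: "'a \<Rightarrow> real"
  assumes "\<And>x. x \<in> A \<Longrightarrow> 0 \<le> P x" "\<And>x. x \<in> A \<Longrightarrow> 0 \<le> Q x"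
    and "sum P A = 1" "sum Q A = 1"
  shows "(\<Sum>x\<in>A. sqrt (P x * Q x))\<^sup>2 / 2 \<le> (\<Sum>x\<in>A. min (P x) (Q x))"
proof -
  have "sqrt (P x * Q x) = sqrt (min (P x) (Q x)) * sqrt (max (P x) (Q x))" for x
    by (simp add: real_sqrt_mult[symmetric] min_def max_def mult.commute)
  then have "(\<Sum>x\<in>A. sqrt (P x * Q x))\<^sup>2
      \<le> (\<Sum>x\<in>A. (sqrt (min (P x) (Q x)))\<^sup>2) * (\<Sum>x\<in>A. (sqrt (max (P x) (Q x)))\<^sup>2)"
    by (simp only: Cauchy_Schwarz_ineq_sum)
  also have "\<dots> = (\<Sum>x\<in>A. min (P x) (Q x)) * (\<Sum>x\<in>A. max (P x) (Q x))"
    using assms by (intro arg_cong2[where f = "(*)"] sum.cong) (auto simp: max_def min_def)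
  also have "\<dots> \<le> (\<Sum>x\<in>A. min (P x) (Q x)) * 2"
  proof (rule mult_left_mono)
    have "(\<Sum>x\<in>A. max (P x) (Q x)) \<le> (\<Sum>x\<in>A. P x + Q x)"
      using assms by (intro sum_mono) (auto simp: max_def)
    then show "(\<Sum>x\<in>A. max (P x) (Q x)) \<le> 2"
      using assms by (simp add: sum.distrib)
    show "0 \<le> (\<Sum>x\<in>A. min (P x) (Q x))"
      using assms by (intro sum_nonneg) auto
  qed
  finally show ?thesis by simp
qed

lemma sum_Pow_insert:
  assumes "finite B" "j \<notin> B"
  shows "(\<Sum>S\<in>Pow (insert j B). f S) = (\<Sum>S\<in>Pow B. f S + f (insert j S))"
proof -
  have "inj_on (insert j) (Pow B)"
    using assms by (intro inj_onI) (metis Pow_iff insert_ident subsetD)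
  moreover have "Pow B \<inter> insert j ` Pow B = {}"
    using assms by auto
  ultimately have "(\<Sum>S\<in>Pow (insert j B). f S) = (\<Sum>S\<in>Pow B. f S) + (\<Sum>S\<in>Pow B. f (insert j S))"
    using assms unfolding Pow_insert by (simp add: sum.union_disjoint sum.reindex)
  then show ?thesis by (simp add: sum.distrib)
qed

lemma real_sqrt_prod: "sqrt (\<Prod>i\<in>A. f i) = (\<Prod>i\<in>A. sqrt (f i))"
  by (induct A rule: infinite_finite_induct) (auto simp: real_sqrt_mult)

lemma l1dist_nonneg: "0 \<le> l1dist k p q"
  by (simp add: l1dist_def sum_nonneg)

(* Measurability is only assumed for the L1 losses; a coordinate is recovered from the losses
   against the vertex e_a and against 0. *)
lemma coordinate_eq_l1dist:
  assumes "q \<in> prob_simplex k" "a \<in> {1..k}"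
  shows "q a = (1 - l1dist k (\<lambda>j. if j = a then 1 else 0) q + l1dist k (\<lambda>_. 0) q) / 2"
proof -
  have "l1dist k (\<lambda>j. if j = a then 1 else 0) q = \<bar>1 - q a\<bar> + (\<Sum>j\<in>{1..k} - {a}. \<bar>q j\<bar>)"
    unfolding l1dist_def using assms by (subst sum.remove[of _ a]) (auto intro!: sum.cong)
  moreover have "l1dist k (\<lambda>_. 0) q = \<bar>q a\<bar> + (\<Sum>j\<in>{1..k} - {a}. \<bar>q j\<bar>)"
    unfolding l1dist_def using assms by (subst sum.remove[of _ a]) auto
  ultimately show ?thesis
    using assms unfolding prob_simplex_def by auto
qed

lemma coordinate_measurable:
  assumes "space M \<subseteq> prob_simplex k" "a \<in> {1..k}"
    and "\<And>p. l1dist k p \<in> borel_measurable M"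
  shows "(\<lambda>q. q a) \<in> borel_measurable M"
proof -
  have "(\<lambda>q. (1 - l1dist k (\<lambda>j. if j = a then 1 else 0) q + l1dist k (\<lambda>_. 0) q) / 2)
      \<in> borel_measurable M"
    using assms(3) by measurable
  then show ?thesis
    by (rule measurable_cong[THEN iffD1, rotated]) (use assms coordinate_eq_l1dist in auto)
qed

lemma l1dist_mean_le_nn_integral:
  assumes "prob_space M" "space M \<subseteq> prob_simplex k"
    and "\<And>p. l1dist k p \<in> borel_measurable M"
  shows "ennreal (l1dist k p (\<lambda>a. \<integral>q. q a \<partial>M)) \<le> (\<integral>\<^sup>+ q. ennreal (l1dist k p q) \<partial>M)"
proof -
  interpret prob_space M by fact
  have bounded: "\<bar>q a\<bar> \<le> 1" if "q \<in> space M" "a \<in> {1..k}" for q a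
    using assms(2) that unfolding prob_simplex_def by auto
  have integrable: "integrable M (\<lambda>q. q a)" if "a \<in> {1..k}" for a
    using coordinate_measurable[OF assms(2) that assms(3)] bounded[OF _ that]
    by (intro integrable_const_bound[where B = 1] AE_I2) auto
  have "l1dist k p (\<lambda>a. \<integral>q. q a \<partial>M) = (\<Sum>a=1..k. \<bar>\<integral>q. p a - q a \<partial>M\<bar>)"
    unfolding l1dist_def using integrable by (intro sum.cong) (simp_all add: prob_space)
  also have "\<dots> \<le> (\<Sum>a=1..k. \<integral>q. \<bar>p a - q a\<bar> \<partial>M)"
    by (intro sum_mono integral_abs_bound)
  also have "\<dots> = (\<integral>q. l1dist k p q \<partial>M)"
    unfolding l1dist_def using integrable by (intro Bochner_Integration.integral_sum[symmetric]) auto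
  also have "ennreal \<dots> = (\<integral>\<^sup>+ q. ennreal (l1dist k p q) \<partial>M)"
    unfolding l1dist_def using integrable
    by (intro nn_integral_eq_integral[symmetric]) (auto intro!: sum_nonneg)
  finally show ?thesis
    by (simp add: ennreal_leI)
qed

definition deterministic_risk ::
    "nat \<Rightarrow> nat \<Rightarrow> ((nat \<Rightarrow> nat) \<Rightarrow> nat \<Rightarrow> real) \<Rightarrow> (nat \<Rightarrow> real) \<Rightarrow> real" where
  "deterministic_risk k n est p = (\<Sum>x\<in>samples k n. sample_prob n p x * l1dist k p (est x))"

definition mean_estimate ::
    "((nat \<Rightarrow> nat) \<Rightarrow> (nat \<Rightarrow> real) measure) \<Rightarrow> (nat \<Rightarrow> nat) \<Rightarrow> nat \<Rightarrow> real" where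
  "mean_estimate est x = (\<lambda>a. \<integral>q. q a \<partial>est x)"

lemma deterministic_risk_mean_estimate_le_risk:
  assumes "randomized_estimator k n est" "p \<in> prob_simplex k"
  shows "ennreal (deterministic_risk k n (mean_estimate est) p) \<le> risk k n est p"
proof -
  have "ennreal (deterministic_risk k n (mean_estimate est) p)
      = (\<Sum>x\<in>samples k n. ennreal (sample_prob n p x) * ennreal (l1dist k p (mean_estimate est x)))"
    unfolding deterministic_risk_def using sample_prob_nonneg[OF assms(2)] l1dist_nonneg
    by (simp add: sum_ennreal[symmetric] ennreal_mult)
  also have "\<dots> \<le> risk k n est p"
    unfolding risk_def mean_estimate_def using assms(1) unfolding randomized_estimator_def
    by (intro sum_mono mult_left_mono l1dist_mean_le_nn_integral) auto
  finally show ?thesis .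
qed

locale assouad_cube =
  fixes k n m :: nat and \<delta> :: real
  assumes m_pos: "1 \<le> m" and pairs_le_k: "2 * m \<le> k"
    and \<delta>_nonneg: "0 \<le> \<delta>" and \<delta>_le_1: "\<delta> \<le> 1"
    and \<delta>_small: "4 * real n * \<delta>\<^sup>2 \<le> real m"
begin

definition pair_weight :: "bool \<Rightarrow> real" where
  "pair_weight b = (1 + (if b then \<delta> else - \<delta>)) / (2 * real m)"

definition cube_dist :: "nat set \<Rightarrow> nat \<Rightarrow> real" where
  "cube_dist S i = (if i \<in> {1..2*m}
     then pair_weight (if odd i then (i - 1) div 2 \<in> S else (i - 1) div 2 \<notin> S) else 0)"

lemma pair_weight_add: "pair_weight b + pair_weight (\<not> b) = 1 / real m"
  using m_pos by (auto simp: pair_weight_def field_simps)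

lemma pair_weight_nonneg: "0 \<le> pair_weight b"
  using \<delta>_nonneg \<delta>_le_1 by (auto simp: pair_weight_def)

lemma pair_weight_le_1: "pair_weight b \<le> 1"
  using m_pos \<delta>_nonneg \<delta>_le_1 by (auto simp: pair_weight_def field_simps)

lemma pair_weight_geometric_mean: "(1 - \<delta>\<^sup>2) / (2 * real m) \<le> sqrt (pair_weight True * pair_weight False)"
proof -
  have "pair_weight True * pair_weight False = (1 - \<delta>\<^sup>2) / (2 * real m)\<^sup>2"
    by (simp add: pair_weight_def field_simps power2_eq_square)
  moreover have "((1 - \<delta>\<^sup>2) / (2 * real m))\<^sup>2 \<le> (1 - \<delta>\<^sup>2) / (2 * real m)\<^sup>2"
    using \<delta>_nonneg \<delta>_le_1 power_le_one[of \<delta> 2]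
    by (simp add: power_divide divide_right_mono power2_eq_square mult_left_le_one_le)
  ultimately show ?thesis by (simp add: real_le_rsqrt)
qed

lemma cube_dist_nonneg: "0 \<le> cube_dist S i"
  by (simp add: cube_dist_def pair_weight_nonneg)

lemma sum_coords_eq_sum_pairs:
  assumes "\<And>i. i \<notin> {1..2*m} \<Longrightarrow> f i = 0"
  shows "(\<Sum>i=1..k. f i) = (\<Sum>j<m. f (2*j + 1) + f (2*j + 2))"
proof -
  have "(\<Sum>i=1..k. f i) = (\<Sum>i=1..2*m. f i)"
    using assms pairs_le_k by (intro sum.mono_neutral_right) auto
  then show ?thesis by (simp only: sum_pairs)
qed

lemma sum_cube_dist: "(\<Sum>i=1..k. cube_dist S i) = 1"
proof -
  have "(\<Sum>i=1..k. cube_dist S i) = (\<Sum>j<m. pair_weight (j \<in> S) + pair_weight (j \<notin> S))"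
    by (subst sum_coords_eq_sum_pairs) (auto simp: cube_dist_def)
  also have "\<dots> = 1"
    using m_pos by (simp add: pair_weight_add)
  finally show ?thesis .
qed

lemma cube_dist_in_simplex: "cube_dist S \<in> prob_simplex k"
proof -
  have "cube_dist S i \<le> 1" for i
    by (simp add: cube_dist_def pair_weight_le_1)
  moreover have "cube_dist S i = 0" if "i \<notin> {1..k}" for i
    using that pairs_le_k unfolding cube_dist_def by auto
  ultimately show ?thesis
    unfolding prob_simplex_def using sum_cube_dist cube_dist_nonneg by blast
qed

lemma bhattacharyya_cube_neighbours:
  assumes "j < m" "j \<notin> S"
  shows "1 - \<delta>\<^sup>2 / m \<le> (\<Sum>i=1..k. sqrt (cube_dist S i * cube_dist (insert j S) i))"
proof -
  define g where "g l = sqrt (pair_weight (l \<in> S) * pair_weight (l \<in> insert j S))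
      + sqrt (pair_weight (l \<notin> S) * pair_weight (l \<notin> insert j S))" for l
  have "(\<Sum>i=1..k. sqrt (cube_dist S i * cube_dist (insert j S) i)) = (\<Sum>l<m. g l)"
    by (subst sum_coords_eq_sum_pairs) (auto simp: cube_dist_def g_def)
  also have "\<dots> = g j + (\<Sum>l\<in>{..<m} - {j}. g l)"
    using assms by (simp add: sum.remove)
  also have "(\<Sum>l\<in>{..<m} - {j}. g l) = (\<Sum>l\<in>{..<m} - {j}. 1 / m)"
    using pair_weight_nonneg by (intro sum.cong) (auto simp: g_def pair_weight_add)
  also have "\<dots> = (m - 1) / m"
    using assms by simp
  finally have "(\<Sum>i=1..k. sqrt (cube_dist S i * cube_dist (insert j S) i)) = g j + (m - 1) / m" .
  moreover have "g j = 2 * sqrt (pair_weight True * pair_weight False)"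
    using assms by (simp add: g_def mult.commute)
  ultimately show ?thesis
    using pair_weight_geometric_mean m_pos by (simp add: field_simps)
qed

lemma sample_overlap_cube_neighbours:
  assumes "j < m" "j \<notin> S"
  shows "1 / 4 \<le> (\<Sum>x\<in>samples k n.
           min (sample_prob n (cube_dist S) x) (sample_prob n (cube_dist (insert j S)) x))"
proof -
  define \<rho> where "\<rho> = (\<Sum>i=1..k. sqrt (cube_dist S i * cube_dist (insert j S) i))"
  have small: "2 * n * (\<delta>\<^sup>2 / m) \<le> 1 / 2" and "\<delta>\<^sup>2 / m \<le> 1"
    using \<delta>_small \<delta>_le_1 \<delta>_nonneg m_pos power_le_one[of \<delta> 2] by (auto simp: field_simps)
  then have "1 / 2 \<le> (1 - \<delta>\<^sup>2 / m) ^ (2 * n)"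
    using Bernoulli_inequality[of "- (\<delta>\<^sup>2 / m)" "2 * n"] by simp
  also have "\<dots> \<le> \<rho> ^ (2 * n)"
    using bhattacharyya_cube_neighbours[OF assms] \<open>\<delta>\<^sup>2 / m \<le> 1\<close> unfolding \<rho>_def
    by (intro power_mono) auto
  also have "\<rho> ^ (2 * n) = (\<rho> ^ n)\<^sup>2"
    by (simp add: power_mult mult.commute)
  also have "\<rho> ^ n = (\<Sum>x\<in>samples k n.
      sqrt (sample_prob n (cube_dist S) x * sample_prob n (cube_dist (insert j S)) x))"
    (is "_ = ?affinity")
    unfolding \<rho>_def sample_prob_def prod.distrib[symmetric] real_sqrt_prod
    by (rule sum_samples_prod[symmetric])
  finally have "1 / 2 \<le> ?affinity\<^sup>2" .
  moreover have "?affinity\<^sup>2 / 2 \<le> (\<Sum>x\<in>samples k n.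
      min (sample_prob n (cube_dist S) x) (sample_prob n (cube_dist (insert j S)) x))"
    by (intro sum_min_ge_affinity sample_prob_nonneg[OF cube_dist_in_simplex]
        sum_sample_prob[OF cube_dist_in_simplex])
  ultimately show ?thesis by linarith
qed

definition pair_loss :: "nat \<Rightarrow> bool \<Rightarrow> (nat \<Rightarrow> real) \<Rightarrow> real" where
  "pair_loss j b q = \<bar>pair_weight b - q (2*j + 1)\<bar> + \<bar>pair_weight (\<not> b) - q (2*j + 2)\<bar>"

lemma pair_loss_nonneg: "0 \<le> pair_loss j b q"
  by (simp add: pair_loss_def)

lemma pair_loss_opposite: "2 * \<delta> / m \<le> pair_loss j True q + pair_loss j False q"
proof -
  have "pair_weight True - pair_weight False = \<delta> / m"
    using m_pos by (simp add: pair_weight_def field_simps)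
  then show ?thesis
    unfolding pair_loss_def by (simp; linarith)
qed

lemma l1dist_ge_pair_losses: "(\<Sum>j<m. pair_loss j (j \<in> S) q) \<le> l1dist k (cube_dist S) q"
proof -
  have "(\<Sum>j<m. pair_loss j (j \<in> S) q) = (\<Sum>i=1..2*m. \<bar>cube_dist S i - q i\<bar>)"
    by (subst sum_pairs) (intro sum.cong; simp add: pair_loss_def cube_dist_def)
  also have "\<dots> \<le> l1dist k (cube_dist S) q"
    unfolding l1dist_def using pairs_le_k by (intro sum_mono2) auto
  finally show ?thesis .
qed

definition pair_risk :: "((nat \<Rightarrow> nat) \<Rightarrow> nat \<Rightarrow> real) \<Rightarrow> nat \<Rightarrow> nat set \<Rightarrow> real" where
  "pair_risk est j S =
     (\<Sum>x\<in>samples k n. sample_prob n (cube_dist S) x * pair_loss j (j \<in> S) (est x))"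

lemma deterministic_risk_ge_pair_risks: "(\<Sum>j<m. pair_risk est j S) \<le> deterministic_risk k n est (cube_dist S)"
proof -
  have "(\<Sum>j<m. pair_risk est j S)
      = (\<Sum>x\<in>samples k n. sample_prob n (cube_dist S) x * (\<Sum>j<m. pair_loss j (j \<in> S) (est x)))"
    unfolding pair_risk_def by (simp add: sum_distrib_left sum.swap[of _ "{..<m}"])
  also have "\<dots> \<le> deterministic_risk k n est (cube_dist S)"
    unfolding deterministic_risk_def
    by (intro sum_mono mult_left_mono l1dist_ge_pair_losses sample_prob_nonneg[OF cube_dist_in_simplex])
  finally show ?thesis .
qed

lemma pair_risk_cube_neighbours:
  assumes "j < m" "j \<notin> S"
  shows "\<delta> / (2 * m) \<le> pair_risk est j S + pair_risk est j (insert j S)"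
proof -
  let ?P = "sample_prob n (cube_dist S)" and ?Q = "sample_prob n (cube_dist (insert j S))"
  have "1 / 4 * (2 * \<delta> / m) \<le> (\<Sum>x\<in>samples k n. min (?P x) (?Q x)) * (2 * \<delta> / m)"
    using sample_overlap_cube_neighbours[OF assms] \<delta>_nonneg by (intro mult_right_mono) auto
  also have "\<dots> = (\<Sum>x\<in>samples k n. min (?P x) (?Q x) * (2 * \<delta> / m))"
    by (rule sum_distrib_right)
  also have "\<dots> \<le> (\<Sum>x\<in>samples k n. ?P x * pair_loss j False (est x) + ?Q x * pair_loss j True (est x))"
  proof (rule sum_mono)
    fix x
    have "min (?P x) (?Q x) * (2 * \<delta> / m)
        \<le> min (?P x) (?Q x) * (pair_loss j False (est x) + pair_loss j True (est x))"
      using pair_loss_opposite[of j "est x"]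
      by (intro mult_left_mono) (linarith, simp add: sample_prob_nonneg[OF cube_dist_in_simplex])
    also have "\<dots> \<le> ?P x * pair_loss j False (est x) + ?Q x * pair_loss j True (est x)"
      unfolding distrib_left by (intro add_mono mult_right_mono) (auto simp: pair_loss_nonneg)
    finally show "min (?P x) (?Q x) * (2 * \<delta> / m)
        \<le> ?P x * pair_loss j False (est x) + ?Q x * pair_loss j True (est x)" .
  qed
  also have "\<dots> = pair_risk est j S + pair_risk est j (insert j S)"
    using assms unfolding pair_risk_def by (simp add: sum.distrib)
  finally show ?thesis by simp
qed

lemma ex_cube_dist_deterministic_risk_ge: "\<exists>S. \<delta> / 4 \<le> deterministic_risk k n est (cube_dist S)"
proof -
  have pairs: "2 ^ (m - 1) * (\<delta> / (2 * m)) \<le> (\<Sum>S\<in>Pow {..<m}. pair_risk est j S)"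
    if "j < m" for j
  proof -
    have "{..<m} = insert j ({..<m} - {j})"
      using that by auto
    then have "(\<Sum>S\<in>Pow {..<m}. pair_risk est j S)
        = (\<Sum>S\<in>Pow ({..<m} - {j}). pair_risk est j S + pair_risk est j (insert j S))"
      by (metis sum_Pow_insert finite_Diff finite_lessThan Diff_iff insertI1)
    also have "\<dots> \<ge> (\<Sum>S\<in>Pow ({..<m} - {j}). \<delta> / (2 * m))"
      using that by (intro sum_mono pair_risk_cube_neighbours) auto
    finally show ?thesis
      using that by (simp add: card_Pow)
  qed
  have "2 ^ m * (\<delta> / 4) = (\<Sum>j<m. 2 ^ (m - 1) * (\<delta> / (2 * m)))"
    using m_pos by (simp add: field_simps power_eq_if)
  also have "\<dots> \<le> (\<Sum>j<m. \<Sum>S\<in>Pow {..<m}. pair_risk est j S)"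
    using pairs by (intro sum_mono) auto
  also have "\<dots> = (\<Sum>S\<in>Pow {..<m}. \<Sum>j<m. pair_risk est j S)"
    by (rule sum.swap)
  also have "\<dots> \<le> (\<Sum>S\<in>Pow {..<m}. deterministic_risk k n est (cube_dist S))"
    by (intro sum_mono deterministic_risk_ge_pair_risks)
  finally have average: "2 ^ m * (\<delta> / 4) \<le> (\<Sum>S\<in>Pow {..<m}. deterministic_risk k n est (cube_dist S))" .
  show ?thesis
  proof (rule ccontr)
    assume "\<nexists>S. \<delta> / 4 \<le> deterministic_risk k n est (cube_dist S)"
    then have "deterministic_risk k n est (cube_dist S) < \<delta> / 4" for S
      by (simp add: not_le)
    then have "(\<Sum>S\<in>Pow {..<m}. deterministic_risk k n est (cube_dist S)) < card (Pow {..<m}) * (\<delta> / 4)"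
      by (intro sum_bounded_above_strict) (auto simp: card_gt_0_iff)
    then show False
      using average by (simp add: card_Pow)
  qed
qed

end

lemma rate_le_quarter_delta:
  fixes n k :: nat
  assumes "1 \<le> n" "2 \<le> k" "k \<le> 32 * n"
  shows "3 * ln 2 / 4096 * sqrt ((real k - 1) / real n)
           \<le> min 1 (sqrt (real (k div 2) / (4 * real n))) / 4"
proof -
  define s where "s = sqrt ((real k - 1) / real n)"
  define t where "t = sqrt (real (k div 2) / (4 * real n))"
  have n: "0 < real n"
    using assms by simp
  have "(real k - 1) / real n \<le> 6\<^sup>2"
    using assms n by (simp add: field_simps)
  then have s_le_6: "s \<le> 6"
    unfolding s_def by (rule real_le_lsqrt[rotated]) simp
  have "real k - 1 \<le> 2 * real (k div 2)"
    by linarith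
  then have "(real k - 1) / real n \<le> 2 * real (k div 2) / real n"
    using n by (intro divide_right_mono) auto
  also have "\<dots> \<le> 3\<^sup>2 * (real (k div 2) / (4 * real n))"
    using n by (simp add: field_simps)
  finally have "s \<le> 3 * t"
    unfolding s_def t_def by (metis real_sqrt_le_mono real_sqrt_mult real_sqrt_abs abs_numeral)
  moreover have "0 \<le> s"
    unfolding s_def using assms by simp
  ultimately have "s \<le> 6 * min 1 t"
    using s_le_6 by (simp add: min_def)
  moreover have "3 * ln 2 / 4096 * s \<le> 3 / 4096 * s"
    using ln_2_less_1 \<open>0 \<le> s\<close> by (intro mult_right_mono) auto
  ultimately show ?thesis
    using \<open>0 \<le> s\<close> unfolding s_def t_def by linarith
qed

lemma assouad_cube_minimax_choice:
  assumes "1 \<le> n" "2 \<le> k"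
  shows "assouad_cube k n (k div 2) (min 1 (sqrt (real (k div 2) / (4 * real n))))"
proof
  let ?m = "real (k div 2)" and ?\<delta> = "min 1 (sqrt (real (k div 2) / (4 * real n)))"
  have "?\<delta>\<^sup>2 \<le> (sqrt (?m / (4 * real n)))\<^sup>2"
    by (intro power_mono) auto
  then show "4 * real n * ?\<delta>\<^sup>2 \<le> ?m"
    using assms by (simp add: field_simps)
qed (use assms in auto)

theorem lemma9:
  fixes n k :: nat
  assumes "n \<ge> 1" and "1 \<le> k" and "k \<le> 32 * n"
  shows "(INF est\<in>{est. randomized_estimator k n est}. SUP p\<in>prob_simplex k. risk k n est p)
           \<ge> ennreal (3 * ln 2 / 4096 * sqrt ((real k - 1) / real n))"
proof (cases "k = 1")
  case True
  then show ?thesis by simp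
next
  case False
  define \<delta> where "\<delta> = min 1 (sqrt (real (k div 2) / (4 * real n)))"
  interpret assouad_cube k n "k div 2" \<delta>
    unfolding \<delta>_def using False assms by (intro assouad_cube_minimax_choice) auto
  have rate: "3 * ln 2 / 4096 * sqrt ((real k - 1) / real n) \<le> \<delta> / 4"
    unfolding \<delta>_def using False assms by (intro rate_le_quarter_delta) auto
  show ?thesis
  proof (rule INF_greatest)
    fix est assume "est \<in> {est. randomized_estimator k n est}"
    then have est: "randomized_estimator k n est" by simp
    obtain S where "\<delta> / 4 \<le> deterministic_risk k n (mean_estimate est) (cube_dist S)"
      using ex_cube_dist_deterministic_risk_ge by blast
    then have "ennreal (3 * ln 2 / 4096 * sqrt ((real k - 1) / real n))
        \<le> ennreal (deterministic_risk k n (mean_estimate est) (cube_dist S))"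
      using rate by (intro ennreal_leI) linarith
    also have "\<dots> \<le> risk k n est (cube_dist S)"
      by (rule deterministic_risk_mean_estimate_le_risk[OF est cube_dist_in_simplex])
    also have "\<dots> \<le> (SUP p\<in>prob_simplex k. risk k n est p)"
      by (rule SUP_upper[OF cube_dist_in_simplex])
    finally show "ennreal (3 * ln 2 / 4096 * sqrt ((real k - 1) / real n))
        \<le> (SUP p\<in>prob_simplex k. risk k n est p)" .
  qed
qed

end
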